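(* Assume (A1)–(A3). If $m_1<0$, then for every $\theta>0$ and $k\in\mathbb N$ there exist $C>0$ and $\delta>0$ such that for all $(i,j)\in\mathbb N\times\mathbb Z$ and $n\in\mathbb N$, \[\mathbb P_{(i,j)}(T_1(k)\ge n)\le C\exp(\theta i-\delta n),\] where $T_1(k)=\inf\{n>0: X_1(n)=k\}$.
   Context: Let $\mathbb N=\{0,1,2,\dots\}$ and fix an integer $k_0\ge1$. Let $\mu$, $\mu'_j$ ($0\le j<k_0$), $\mu''_i$ ($0\le i<k_0$), $\mu_{ij}$ ($0\le i,j<k_0$) be probability measures on $\mathbb Z^2$. The random walk $Z=(X(n),Y(n))$ on $\mathbb N^2$ has transition probabilities $p((i,j)\to(i',j'))$ equal to $\mu(i'-i,j'-j)$ if $i,j\ge k_0$; $\mu'_j(i'-i,j'-j)$ if $i\ge k_0$, $0\le j<k_0$; $\mu''_i(i'-i,j'-j)$ if $0\le i<k_0$, $j\ge k_0$; $\mu_{ij}(i'-i,j'-j)$ if $0\le i,j<k_0$. Assumptions: (A1) $\mu(a,b)=0$ if $a<-k_0$ or $b<-k_0$; $\mu'_j(a,b)=0$ if $a<-k_0$ or $b<-j$; $\mu''_i(a,b)=0$ if $b<-k_0$ or $a<-i$; $\mu_{ij}(a,b)=0$ if $a<-i$ or $b<-j$. (A2) There are $\delta,\gamma,C>0$ with $\sup_{(i,j)\in\mathbb N^2}\mathbb E_{(i,j)}[\exp(\delta(X(1)-i)+\gamma(Y(1)-j))]\le C$. (A3) $Z_0,Z_1,Z_2,Z$ are irreducible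 on their state spaces. $Z_0$: random walk on $\mathbb Z^2$ with increment law $\mu$; $m_1=\sum a\mu(a,b)$. $Z_1=(X_1,Y_1)$: Markov chain on $\mathbb N\times\mathbb Z$ with transitions $\mu(i'-i,j'-j)$ from $(i,j)$ if $i\ge k_0$ and $\mu''_i(i'-i,j'-j)$ if $0\le i<k_0$; $\mathbb P_{(i,j)}$ is its law from $(i,j)$. $Z_2$: Markov chain on $\mathbb Z\times\mathbb N$ with transitions $\mu$ if $j\ge k_0$ and $\mu'_j$ if $0\le j<k_0$. *)

theory Defs
  imports "HOL-Probability.Probability"
begin

type_synonym state = "int \<times> int"

definition step :: "(state \<Rightarrow> state pmf) \<Rightarrow> state \<Rightarrow> state pmf" where
  "step kern s = map_pmf (\<lambda>d. (fst s + fst d, snd s + snd d)) (kern s)"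

fun traj :: "(state \<Rightarrow> state pmf) \<Rightarrow> state \<Rightarrow> nat \<Rightarrow> state list pmf" where
  "traj kern s 0 = return_pmf [s]"
| "traj kern s (Suc n) = bind_pmf (step kern s) (\<lambda>s'. map_pmf (\<lambda>xs. s # xs) (traj kern s' n))"

definition irreducible_on :: "state set \<Rightarrow> (state \<Rightarrow> state pmf) \<Rightarrow> bool" where
  "irreducible_on S kern \<longleftrightarrow>
     (\<forall>x\<in>S. \<forall>y\<in>S. (x, y) \<in> {(u, v). u \<in> S \<and> v \<in> S \<and> v \<in> set_pmf (step kern u)}\<^sup>*)"

definition NN :: "state set" where "NN = {s. fst s \<ge> 0 \<and> snd s \<ge> 0}"
definition NZ :: "state set" where "NZ = {s. fst s \<ge> 0}"
definition ZN :: "state set" where "ZN = {s. snd s \<ge> 0}"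

definition kernZ :: "nat \<Rightarrow> state pmf \<Rightarrow> (nat \<Rightarrow> state pmf) \<Rightarrow> (nat \<Rightarrow> state pmf)
    \<Rightarrow> (nat \<Rightarrow> nat \<Rightarrow> state pmf) \<Rightarrow> state \<Rightarrow> state pmf" where
  "kernZ k0 mu mu' mu'' mu2 s =
     (if fst s \<ge> int k0 \<and> snd s \<ge> int k0 then mu
      else if fst s \<ge> int k0 then mu' (nat (snd s))
      else if snd s \<ge> int k0 then mu'' (nat (fst s))
      else mu2 (nat (fst s)) (nat (snd s)))"

definition kernZ1 :: "nat \<Rightarrow> state pmf \<Rightarrow> (nat \<Rightarrow> state pmf) \<Rightarrow> state \<Rightarrow> state pmf" where
  "kernZ1 k0 mu mu'' s = (if fst s \<ge> int k0 then mu else mu'' (nat (fst s)))"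

definition kernZ2 :: "nat \<Rightarrow> state pmf \<Rightarrow> (nat \<Rightarrow> state pmf) \<Rightarrow> state \<Rightarrow> state pmf" where
  "kernZ2 k0 mu mu' s = (if snd s \<ge> int k0 then mu else mu' (nat (snd s)))"

text \<open>P_{(i,j)}(T_1(k) \<ge> n) for Z_1, where T_1(k) = inf{m > 0 : X_1(m) = k}
  (inf of the empty set = \<infinity>): the event is that X_1(m) \<noteq> k for all 0 < m < n.\<close>
definition T1_ge_prob :: "nat \<Rightarrow> state pmf \<Rightarrow> (nat \<Rightarrow> state pmf) \<Rightarrow> nat \<Rightarrow> state \<Rightarrow> nat \<Rightarrow> real" where
  "T1_ge_prob k0 mu mu'' k s n =
     measure_pmf.prob (traj (kernZ1 k0 mu mu'') s n)
       {xs. \<forall>m. 0 < m \<and> m < n \<longrightarrow> fst (xs ! m) \<noteq> int k}"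

end

theory Submission
  imports Defs
begin

text \<open>Kill Z_1 when it hits level k: the probability that T_1(k) \<ge> n + 1 is the mass that survives
  one free step followed by n killed steps. Since m_1 < 0 and the increments have exponential
  moments, V(x) = exp(t x) satisfies a geometric drift condition P V \<le> \<psi> V + b with \<psi> < 1 for
  small t > 0. Irreducibility of Z_1 gives a uniform probability p of hitting k within M steps
  from all states below any fixed level R; above a suitable level R the drift alone wins. Hence
  V + c contracts by a factor lam < 1 under M killed steps, and the surviving mass from (i, j)
  decays like lam^(n/M) (exp(t i) + c), which gives the claim because t \<le> \<theta>.\<close>

section \<open>The chain killed at a level\<close>

definition killed_op :: "(state \<Rightarrow> state pmf) \<Rightarrow> int \<Rightarrow> (state \<Rightarrow> ennreal) \<Rightarrow> state \<Rightarrow> ennreal" where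
  "killed_op kern k f s = (if fst s = k then 0 else \<integral>\<^sup>+ s'. f s' \<partial>measure_pmf (step kern s))"

definition avoid_prob :: "(state \<Rightarrow> state pmf) \<Rightarrow> int \<Rightarrow> nat \<Rightarrow> state \<Rightarrow> ennreal" where
  "avoid_prob kern k n s = emeasure (measure_pmf (traj kern s n)) {xs. \<forall>m<n. fst (xs ! m) \<noteq> k}"

lemma avoid_prob_0 [simp]: "avoid_prob kern k 0 s = 1"
  by (simp add: avoid_prob_def measure_pmf.emeasure_space_1[simplified])

lemma avoid_prob_Suc: "avoid_prob kern k (Suc n) s = killed_op kern k (avoid_prob kern k n) s"
proof -
  have "{xs. \<forall>m<Suc n. fst ((s # xs) ! m) \<noteq> k}
      = (if fst s = k then {} else {xs. \<forall>m<n. fst (xs ! m) \<noteq> k})"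
    by (auto simp: less_Suc_eq_0_disj)
  then show ?thesis by (simp add: avoid_prob_def killed_op_def)
qed

lemma avoid_prob_eq_killed_iter: "avoid_prob kern k n = (killed_op kern k ^^ n) (\<lambda>_. 1)"
  by (induction n) (auto simp: avoid_prob_Suc[abs_def])

lemma avoid_prob_le_1: "avoid_prob kern k n s \<le> 1"
  unfolding avoid_prob_def by (rule measure_pmf.emeasure_le_1)

lemma avoid_prob_at_level: "fst s = k \<Longrightarrow> 0 < n \<Longrightarrow> avoid_prob kern k n s = 0"
  by (cases n) (simp_all add: avoid_prob_Suc killed_op_def)

lemma emeasure_no_return_Suc:
  "emeasure (measure_pmf (traj kern s (Suc n))) {xs. \<forall>m. 0 < m \<and> m < Suc n \<longrightarrow> fst (xs ! m) \<noteq> k}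
     = (\<integral>\<^sup>+ s'. avoid_prob kern k n s' \<partial>measure_pmf (step kern s))"
proof -
  have "(\<lambda>xs. s # xs) -` {xs. \<forall>m. 0 < m \<and> m < Suc n \<longrightarrow> fst (xs ! m) \<noteq> k}
      = {xs. \<forall>m<n. fst (xs ! m) \<noteq> k}"
    by (auto simp: less_Suc_eq_0_disj)
  then show ?thesis by (simp add: avoid_prob_def)
qed

lemma killed_op_le_nn_integral: "killed_op kern k f s \<le> (\<integral>\<^sup>+ s'. f s' \<partial>measure_pmf (step kern s))"
  by (simp add: killed_op_def)

lemma killed_op_cmult: "killed_op kern k (\<lambda>s. c * f s) s = c * killed_op kern k f s"
  by (simp add: killed_op_def nn_integral_cmult)

lemma killed_op_add: "killed_op kern k (\<lambda>s. f s + g s) s = killed_op kern k f s + killed_op kern k g s"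
  by (simp add: killed_op_def nn_integral_add)

lemma killed_iter_cmult:
  "(killed_op kern k ^^ m) (\<lambda>s. c * f s) = (\<lambda>s. c * (killed_op kern k ^^ m) f s)"
  by (induction m) (simp_all add: killed_op_cmult)

lemma killed_iter_add:
  "(killed_op kern k ^^ m) (\<lambda>s. f s + g s)
     = (\<lambda>s. (killed_op kern k ^^ m) f s + (killed_op kern k ^^ m) g s)"
  by (induction m) (simp_all add: killed_op_add)

lemma killed_op_mono_on:
  assumes closed: "\<And>s'. s' \<in> set_pmf (step kern s) \<Longrightarrow> s' \<in> D"
    and le: "\<And>s. s \<in> D \<Longrightarrow> f s \<le> g s"
  shows "killed_op kern k f s \<le> killed_op kern k g s"
proof -
  have "(\<integral>\<^sup>+ s'. f s' \<partial>measure_pmf (step kern s)) \<le> (\<integral>\<^sup>+ s'. g s' \<partial>measure_pmf (step kern s))"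
    by (intro nn_integral_mono_AE) (auto simp: AE_measure_pmf_iff intro!: le closed)
  then show ?thesis by (simp add: killed_op_def)
qed

lemma killed_iter_mono_on:
  assumes closed: "\<And>s s'. s \<in> D \<Longrightarrow> s' \<in> set_pmf (step kern s) \<Longrightarrow> s' \<in> D"
    and le: "\<And>s. s \<in> D \<Longrightarrow> f s \<le> g s" and s: "s \<in> D"
  shows "(killed_op kern k ^^ m) f s \<le> (killed_op kern k ^^ m) g s"
  using s
proof (induction m arbitrary: s)
  case 0
  then show ?case using le by simp
next
  case (Suc m)
  have "killed_op kern k ((killed_op kern k ^^ m) f) s \<le> killed_op kern k ((killed_op kern k ^^ m) g) s"
    by (rule killed_op_mono_on[where D = D]) (auto intro: closed Suc)
  then show ?case by simp
qed

lemma killed_iter_mono: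
  "(\<And>s. f s \<le> g s) \<Longrightarrow> (killed_op kern k ^^ m) f s \<le> (killed_op kern k ^^ m) g s"
  using killed_iter_mono_on[of UNIV] by blast

section \<open>Hitting a level\<close>

lemma nn_integral_pmf_le_1_minus:
  fixes f :: "'a \<Rightarrow> ennreal"
  assumes le1: "\<And>y. f y \<le> 1" and fx: "f x \<le> ennreal (1 - p)" and p: "0 \<le> p" "p \<le> 1"
  shows "(\<integral>\<^sup>+ y. f y \<partial>measure_pmf \<mu>) \<le> ennreal (1 - pmf \<mu> x * p)"
proof -
  have pointwise: "f y + ennreal p * indicator {x} y \<le> 1" for y
  proof (cases "y = x")
    case True
    have "f x + ennreal p \<le> ennreal (1 - p) + ennreal p" using fx by (rule add_right_mono)
    also have "\<dots> = 1" using p by (simp add: ennreal_plus[symmetric] del: ennreal_plus)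
    finally show ?thesis using True by simp
  next
    case False
    then show ?thesis using le1 by simp
  qed
  have "(\<integral>\<^sup>+ y. f y \<partial>measure_pmf \<mu>) + ennreal (pmf \<mu> x * p)
      = (\<integral>\<^sup>+ y. f y + ennreal p * indicator {x} y \<partial>measure_pmf \<mu>)"
    using p by (simp add: nn_integral_add nn_integral_cmult_indicator emeasure_pmf_single
        ennreal_mult mult.commute)
  also have "\<dots> \<le> (\<integral>\<^sup>+ y. 1 \<partial>measure_pmf \<mu>)" by (intro nn_integral_mono pointwise)
  also have "\<dots> = 1" by (simp add: measure_pmf.emeasure_space_1[simplified])
  finally show ?thesis
    using p by (metis ennreal_1 ennreal_le_minus_iff ennreal_minus mult_nonneg_nonneg pmf_nonneg)
qed

lemma avoid_prob_eventually_le_if_reachable: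
  assumes "(s, s') \<in> {(u, v). v \<in> set_pmf (step kern u)}\<^sup>*" and "fst s' = k"
  shows "\<exists>p>0. p \<le> 1 \<and> (\<forall>\<^sub>F n in sequentially. avoid_prob kern k n s \<le> ennreal (1 - p))"
  using assms
proof (induction rule: converse_rtrancl_induct)
  case base
  have "\<forall>\<^sub>F n in sequentially. avoid_prob kern k n s' \<le> ennreal (1 - 1)"
    using eventually_gt_at_top[of 0] by eventually_elim (simp add: avoid_prob_at_level base)
  then show ?case by (intro exI[of _ 1]) auto
next
  case (step s s1)
  then obtain p where p: "0 < p" "p \<le> 1"
    and ev: "\<forall>\<^sub>F n in sequentially. avoid_prob kern k n s1 \<le> ennreal (1 - p)"
    by auto
  define q where "q = pmf (step kern s) s1"
  have q: "0 < q" "q \<le> 1" using step.hyps(1) by (simp_all add: q_def pmf_positive pmf_le_1)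
  have "\<forall>\<^sub>F n in sequentially. avoid_prob kern k (Suc n) s \<le> ennreal (1 - q * p)"
    using ev
  proof eventually_elim
    case (elim n)
    have "avoid_prob kern k (Suc n) s \<le> (\<integral>\<^sup>+ s'. avoid_prob kern k n s' \<partial>measure_pmf (step kern s))"
      by (simp add: avoid_prob_Suc killed_op_le_nn_integral)
    also have "\<dots> \<le> ennreal (1 - q * p)"
      unfolding q_def using elim p by (intro nn_integral_pmf_le_1_minus avoid_prob_le_1) auto
    finally show ?case .
  qed
  then have "\<forall>\<^sub>F n in sequentially. avoid_prob kern k n s \<le> ennreal (1 - q * p)"
    by (rule eventually_sequentially_Suc[THEN iffD1])
  then show ?case using p q by (intro exI[of _ "q * p"]) (auto simp: mult_le_one)
qed

lemma avoid_prob_shift_snd: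
  assumes "\<And>x j j'. kern (x, j) = kern (x, j')"
  shows "avoid_prob kern k n (x, j) = avoid_prob kern k n (x, j')"
proof (induction n arbitrary: x j j')
  case (Suc n)
  have "(\<integral>\<^sup>+ d. avoid_prob kern k n (x + fst d, j + snd d) \<partial>measure_pmf (kern (x, j)))
      = (\<integral>\<^sup>+ d. avoid_prob kern k n (x + fst d, j' + snd d) \<partial>measure_pmf (kern (x, j')))"
    using Suc.IH assms[of x j j'] by (metis (no_types, lifting) nn_integral_cong)
  then show ?case by (simp add: avoid_prob_Suc killed_op_def step_def)
qed simp

lemma uniform_hitting_below_level:
  assumes irr: "irreducible_on NZ kern" and inv: "\<And>x j j'. kern (x, j) = kern (x, j')"
    and k: "0 \<le> k"
  shows "\<exists>p M. 0 < p \<and> p \<le> 1 \<and> 1 \<le> M \<and>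
           (\<forall>s. 0 \<le> fst s \<and> fst s < R \<longrightarrow> avoid_prob kern k M s \<le> ennreal (1 - p))"
proof -
  have "\<forall>x\<in>{0..<R}. \<exists>p>0. p \<le> 1 \<and>
          (\<forall>\<^sub>F n in sequentially. avoid_prob kern k n (x, 0) \<le> ennreal (1 - p))"
  proof
    fix x assume "x \<in> {0..<R}"
    then have "((x, 0), (k, 0)) \<in> {(u, v). u \<in> NZ \<and> v \<in> NZ \<and> v \<in> set_pmf (step kern u)}\<^sup>*"
      using irr k unfolding irreducible_on_def by (auto simp: NZ_def)
    then have "((x, 0), (k, 0)) \<in> {(u, v). v \<in> set_pmf (step kern u)}\<^sup>*"
      by (rule rtrancl_mono[THEN subsetD, rotated]) auto
    then show "\<exists>p>0. p \<le> 1 \<and> (\<forall>\<^sub>F n in sequentially. avoid_prob kern k n (x, 0) \<le> ennreal (1 - p))"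
      by (rule avoid_prob_eventually_le_if_reachable) simp
  qed
  then obtain P where P: "\<And>x. x \<in> {0..<R} \<Longrightarrow> 0 < P x \<and> P x \<le> 1 \<and>
      (\<forall>\<^sub>F n in sequentially. avoid_prob kern k n (x, 0) \<le> ennreal (1 - P x))"
    by metis
  define p where "p = Min (insert 1 (P ` {0..<R}))"
  have p: "0 < p" "p \<le> 1" using P by (auto simp: p_def)
  have p_le: "p \<le> P x" if "x \<in> {0..<R}" for x
    unfolding p_def using that by (intro Min_le) auto
  have "\<forall>\<^sub>F n in sequentially. \<forall>x\<in>{0..<R}. avoid_prob kern k n (x, 0) \<le> ennreal (1 - p)"
  proof (intro eventually_ball_finite ballI)
    fix x assume x: "x \<in> {0..<R}"
    show "\<forall>\<^sub>F n in sequentially. avoid_prob kern k n (x, 0) \<le> ennreal (1 - p)"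
      using P[OF x] p_le[OF x] by (auto elim!: eventually_mono intro: order_trans ennreal_leI)
  qed simp
  then obtain N where N: "\<forall>x\<in>{0..<R}. avoid_prob kern k (Suc N) (x, 0) \<le> ennreal (1 - p)"
    unfolding eventually_sequentially by (meson le_SucI order_refl)
  have "avoid_prob kern k (Suc N) s \<le> ennreal (1 - p)" if "0 \<le> fst s" "fst s < R" for s
    using N that avoid_prob_shift_snd[of kern k "Suc N" "fst s" "snd s" 0] inv by (cases s) auto
  then show ?thesis using p by (intro exI[of _ p] exI[of _ "Suc N"]) auto
qed

section \<open>Exponential moments\<close>

lemma exp_le_quadratic: "exp (y::real) \<le> 1 + y + y\<^sup>2 * exp \<bar>y\<bar>"
proof -
  obtain \<xi> where \<xi>: "\<bar>\<xi>\<bar> \<le> \<bar>y\<bar>" "exp y = (\<Sum>m<2. y ^ m / fact m) + exp \<xi> / fact 2 * y\<^sup>2"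
    using Maclaurin_exp_le[of y 2] by blast
  have "exp \<xi> \<le> exp \<bar>y\<bar>" using \<xi>(1) by simp
  then have "exp \<xi> / 2 \<le> exp \<bar>y\<bar>" using exp_gt_zero[of \<xi>] by linarith
  then have "exp \<xi> / 2 * y\<^sup>2 \<le> exp \<bar>y\<bar> * y\<^sup>2" by (rule mult_right_mono) simp
  moreover have "(fact 2 :: real) = 2" by (simp add: fact_numeral)
  moreover have "(\<Sum>m<2. y ^ m / fact m) = 1 + y" by (simp add: numeral_2_eq_2)
  ultimately show ?thesis using \<xi>(2) by (simp add: mult.commute)
qed

lemma exp_le_quadratic_bounded_below:
  fixes a t t0 L :: real
  assumes a: "- L \<le> a" and t: "0 < t" "t \<le> t0"
  shows "exp (t * a) \<le> 1 + t * a + t\<^sup>2 * (L\<^sup>2 * exp (t0 * L) + 2 / t0\<^sup>2 * exp (2 * t0 * a))"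
proof -
  have t0: "0 < t0" using t by simp
  have "a\<^sup>2 * exp \<bar>t * a\<bar> \<le> L\<^sup>2 * exp (t0 * L) + 2 / t0\<^sup>2 * exp (2 * t0 * a)"
  proof (cases "0 \<le> a")
    case True
    have "\<bar>t * a\<bar> \<le> t0 * a" using True t by (simp add: mult_right_mono)
    then have e: "exp \<bar>t * a\<bar> \<le> exp (t0 * a)" by simp
    have "1 + t0 * a + (t0 * a)\<^sup>2 / 2 \<le> exp (t0 * a)"
      using True t0 by (intro exp_lower_Taylor_quadratic) simp
    moreover have "0 \<le> t0 * a" using True t0 by simp
    ultimately have "t0\<^sup>2 * a\<^sup>2 \<le> 2 * exp (t0 * a)"
      by (simp add: power_mult_distrib)
    then have a2: "a\<^sup>2 \<le> 2 / t0\<^sup>2 * exp (t0 * a)"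
      using t0 by (simp add: field_simps)
    have "a\<^sup>2 * exp \<bar>t * a\<bar> \<le> 2 / t0\<^sup>2 * exp (t0 * a) * exp (t0 * a)"
      using a2 e by (intro mult_mono) auto
    also have "\<dots> = 2 / t0\<^sup>2 * exp (2 * t0 * a)" by (simp add: exp_add[symmetric])
    finally show ?thesis by (simp add: add_increasing)
  next
    case False
    then have aL: "\<bar>a\<bar> \<le> L" using a by simp
    then have "a\<^sup>2 \<le> L\<^sup>2" using abs_le_square_iff by fastforce
    moreover have "\<bar>t * a\<bar> \<le> t0 * L" using aL t by (simp add: abs_mult mult_mono)
    ultimately have "a\<^sup>2 * exp \<bar>t * a\<bar> \<le> L\<^sup>2 * exp (t0 * L)" by (intro mult_mono) auto
    then show ?thesis by (simp add: add_increasing2)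
  qed
  then have "(t * a)\<^sup>2 * exp \<bar>t * a\<bar> \<le> t\<^sup>2 * (L\<^sup>2 * exp (t0 * L) + 2 / t0\<^sup>2 * exp (2 * t0 * a))"
    by (simp add: power_mult_distrib mult.assoc mult_left_mono)
  then show ?thesis using exp_le_quadratic[of "t * a"] by linarith
qed

lemma exp_le_1_plus_exp:
  fixes t \<delta> x :: real
  assumes "0 \<le> t" "t \<le> \<delta>"
  shows "exp (t * x) \<le> 1 + exp (\<delta> * x)"
proof (cases "0 \<le> x")
  case True
  then have "exp (t * x) \<le> exp (\<delta> * x)" using assms by (simp add: mult_right_mono)
  then show ?thesis by (smt (verit) exp_gt_zero)
next
  case False
  then have "exp (t * x) \<le> 1" using assms by (simp add: mult_nonneg_nonpos)
  then show ?thesis by (smt (verit) exp_gt_zero)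
qed

lemma nn_integral_exp_smaller_exponent:
  fixes \<mu> :: "'a pmf" and X :: "'a \<Rightarrow> real"
  assumes "0 \<le> t" "t \<le> \<delta>"
  shows "(\<integral>\<^sup>+ x. ennreal (exp (t * X x)) \<partial>measure_pmf \<mu>) \<le> 1 + (\<integral>\<^sup>+ x. ennreal (exp (\<delta> * X x)) \<partial>measure_pmf \<mu>)"
proof -
  have "(\<integral>\<^sup>+ x. ennreal (exp (t * X x)) \<partial>measure_pmf \<mu>) \<le> (\<integral>\<^sup>+ x. 1 + ennreal (exp (\<delta> * X x)) \<partial>measure_pmf \<mu>)"
  proof (intro nn_integral_mono)
    fix x
    have "ennreal (exp (t * X x)) \<le> ennreal (1 + exp (\<delta> * X x))"
      using exp_le_1_plus_exp[OF assms] by (rule ennreal_leI)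
    then show "ennreal (exp (t * X x)) \<le> 1 + ennreal (exp (\<delta> * X x))" by simp
  qed
  also have "\<dots> = 1 + (\<integral>\<^sup>+ x. ennreal (exp (\<delta> * X x)) \<partial>measure_pmf \<mu>)"
    by (simp add: nn_integral_add measure_pmf.emeasure_space_1[simplified])
  finally show ?thesis .
qed

lemma integrable_exp_smaller_exponent:
  fixes \<mu> :: "'a pmf" and X :: "'a \<Rightarrow> real"
  assumes int: "integrable (measure_pmf \<mu>) (\<lambda>x. exp (\<delta> * X x))" and t: "0 \<le> t" "t \<le> \<delta>"
  shows "integrable (measure_pmf \<mu>) (\<lambda>x. exp (t * X x))"
proof (rule Bochner_Integration.integrable_bound)
  show "integrable (measure_pmf \<mu>) (\<lambda>x. 1 + exp (\<delta> * X x))"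
    using int by auto
  have "norm (1 + exp (\<delta> * X x)) = 1 + exp (\<delta> * X x)" for x
    by (smt (verit) exp_gt_zero real_norm_def)
  then show "AE x in measure_pmf \<mu>. norm (exp (t * X x)) \<le> norm (1 + exp (\<delta> * X x))"
    using exp_le_1_plus_exp[OF t] by (intro AE_I2) simp
qed auto

lemma integrable_of_exp_moment:
  fixes \<mu> :: "'a pmf" and X :: "'a \<Rightarrow> real"
  assumes int: "integrable (measure_pmf \<mu>) (\<lambda>x. exp (\<delta> * X x))" and \<delta>: "0 < \<delta>"
    and low: "\<forall>x\<in>set_pmf \<mu>. - L \<le> X x"
  shows "integrable (measure_pmf \<mu>) X"
proof (rule Bochner_Integration.integrable_bound)
  show "integrable (measure_pmf \<mu>) (\<lambda>x. \<bar>L\<bar> + exp (\<delta> * X x) / \<delta>)"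
    using int by auto
  have "\<bar>X x\<bar> \<le> \<bar>L\<bar> + exp (\<delta> * X x) / \<delta>" if "x \<in> set_pmf \<mu>" for x
  proof (cases "0 \<le> X x")
    case True
    have "\<delta> * X x \<le> exp (\<delta> * X x)" using exp_ge_add_one_self[of "\<delta> * X x"] by linarith
    then have "X x \<le> exp (\<delta> * X x) / \<delta>" using \<delta> by (simp add: pos_le_divide_eq mult.commute)
    then show ?thesis using True by simp
  next
    case False
    then show ?thesis using low that \<delta> by (smt (verit) divide_pos_pos exp_gt_zero)
  qed
  then show "AE x in measure_pmf \<mu>. norm (X x) \<le> norm (\<bar>L\<bar> + exp (\<delta> * X x) / \<delta>)"
    using \<delta> by (auto simp: AE_measure_pmf_iff)
qed auto

lemma expectation_exp_le_quadratic:
  fixes \<mu> :: "'a pmf" and X :: "'a \<Rightarrow> real"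
  assumes low: "\<forall>x\<in>set_pmf \<mu>. - L \<le> X x"
    and int: "integrable (measure_pmf \<mu>) (\<lambda>x. exp (2 * t0 * X x))" and t: "0 < t" "t \<le> t0"
  shows "measure_pmf.expectation \<mu> (\<lambda>x. exp (t * X x))
    \<le> 1 + t * measure_pmf.expectation \<mu> X
        + t\<^sup>2 * measure_pmf.expectation \<mu> (\<lambda>x. L\<^sup>2 * exp (t0 * L) + 2 / t0\<^sup>2 * exp (2 * t0 * X x))"
    (is "_ \<le> 1 + t * _ + t\<^sup>2 * measure_pmf.expectation \<mu> ?H")
proof -
  have int_X: "integrable (measure_pmf \<mu>) X"
    using t by (intro integrable_of_exp_moment[OF int _ low]) simp
  have int_H: "integrable (measure_pmf \<mu>) ?H"
    using int by auto
  have "measure_pmf.expectation \<mu> (\<lambda>x. exp (t * X x))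
      \<le> measure_pmf.expectation \<mu> (\<lambda>x. 1 + t * X x + t\<^sup>2 * ?H x)"
  proof (rule integral_mono_AE)
    show "integrable (measure_pmf \<mu>) (\<lambda>x. exp (t * X x))"
      using t by (intro integrable_exp_smaller_exponent[OF int]) auto
    show "integrable (measure_pmf \<mu>) (\<lambda>x. 1 + t * X x + t\<^sup>2 * ?H x)"
      using int_X int_H by auto
    show "AE x in measure_pmf \<mu>. exp (t * X x) \<le> 1 + t * X x + t\<^sup>2 * ?H x"
      using exp_le_quadratic_bounded_below[of L _ t t0] low t by (simp add: AE_measure_pmf_iff)
  qed
  also have "\<dots> = 1 + t * measure_pmf.expectation \<mu> X + t\<^sup>2 * measure_pmf.expectation \<mu> ?H"
    using int_X int_H by simp
  finally show ?thesis .
qed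

lemma exp_moment_lt_1_of_neg_mean:
  fixes \<mu> :: "'a pmf" and X :: "'a \<Rightarrow> real"
  assumes low: "\<forall>x\<in>set_pmf \<mu>. - L \<le> X x" and \<delta>: "0 < \<delta>"
    and mom: "(\<integral>\<^sup>+ x. ennreal (exp (\<delta> * X x)) \<partial>measure_pmf \<mu>) < \<infinity>"
    and neg: "measure_pmf.expectation \<mu> X < 0" and \<theta>: "0 < \<theta>"
  obtains t \<psi> where "0 < t" "t \<le> \<theta>" "t \<le> \<delta>" "0 \<le> \<psi>" "\<psi> < 1"
    "(\<integral>\<^sup>+ x. ennreal (exp (t * X x)) \<partial>measure_pmf \<mu>) \<le> ennreal \<psi>"
proof -
  define t0 where "t0 = \<delta> / 2"
  define m where "m = measure_pmf.expectation \<mu> X"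
  define h where "h = measure_pmf.expectation \<mu> (\<lambda>x. L\<^sup>2 * exp (t0 * L) + 2 / t0\<^sup>2 * exp (2 * t0 * X x))"
  have int: "integrable (measure_pmf \<mu>) (\<lambda>x. exp (2 * t0 * X x))"
    using mom by (intro integrableI_nonneg) (auto simp: t0_def)
  have h: "0 \<le> h" unfolding h_def by (intro integral_nonneg_AE) simp
  define t where "t = min \<theta> (min t0 (- m / (2 * (h + 1))))"
  have t0: "0 < t0" using \<delta> by (simp add: t0_def)
  have t: "0 < t" "t \<le> t0" "t \<le> \<theta>"
    using \<theta> t0 neg h by (simp_all add: t_def m_def divide_neg_pos add_pos_nonneg)
  have t_\<delta>: "t \<le> \<delta>" using t(2) \<delta> by (simp add: t0_def)
  have "t * (h + 1) \<le> - m / (2 * (h + 1)) * (h + 1)" using h by (intro mult_right_mono) (simp_all add: t_def)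
  also have "\<dots> = - m / 2" using h by (simp add: field_simps)
  finally have "t * h \<le> - m / 2" using t by (simp add: algebra_simps)
  then have "t\<^sup>2 * h \<le> t * (- m / 2)"
    using mult_left_mono[of "t * h" "- m / 2" t] t by (simp add: power2_eq_square mult.assoc)
  then have "measure_pmf.expectation \<mu> (\<lambda>x. exp (t * X x)) \<le> 1 + t * m / 2"
    using expectation_exp_le_quadratic[OF low int t(1,2)] unfolding m_def h_def by linarith
  moreover have "integrable (measure_pmf \<mu>) (\<lambda>x. exp (t * X x))"
    using t by (intro integrable_exp_smaller_exponent[OF int]) auto
  ultimately have "(\<integral>\<^sup>+ x. ennreal (exp (t * X x)) \<partial>measure_pmf \<mu>) \<le> ennreal (max 0 (1 + t * m / 2))"
    by (simp add: nn_integral_eq_integral ennreal_leI)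
  moreover have "t * m < 0" using t neg by (simp add: m_def mult_pos_neg)
  ultimately show ?thesis using that[of t "max 0 (1 + t * m / 2)"] t t_\<delta> by simp
qed

lemma nn_integral_exp_fst_le:
  fixes \<nu> :: "state pmf" and \<delta> \<gamma> L :: real
  assumes snd_bound: "\<forall>d\<in>set_pmf \<nu>. - L \<le> real_of_int (snd d)" and \<gamma>: "0 \<le> \<gamma>"
  shows "(\<integral>\<^sup>+ d. ennreal (exp (\<delta> * real_of_int (fst d))) \<partial>measure_pmf \<nu>)
    \<le> ennreal (exp (\<gamma> * L)) * (\<integral>\<^sup>+ d. ennreal (exp (\<delta> * real_of_int (fst d) + \<gamma> * real_of_int (snd d))) \<partial>measure_pmf \<nu>)"
proof -
  have "exp (\<delta> * real_of_int (fst d))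
      \<le> exp (\<gamma> * L) * exp (\<delta> * real_of_int (fst d) + \<gamma> * real_of_int (snd d))" if "d \<in> set_pmf \<nu>" for d
  proof -
    have "0 \<le> L + real_of_int (snd d)" using snd_bound that by fastforce
    then have "0 \<le> \<gamma> * (L + real_of_int (snd d))" using \<gamma> by simp
    then show ?thesis by (simp add: algebra_simps flip: exp_add)
  qed
  then have "(\<integral>\<^sup>+ d. ennreal (exp (\<delta> * real_of_int (fst d))) \<partial>measure_pmf \<nu>)
    \<le> (\<integral>\<^sup>+ d. ennreal (exp (\<gamma> * L)) * ennreal (exp (\<delta> * real_of_int (fst d) + \<gamma> * real_of_int (snd d))) \<partial>measure_pmf \<nu>)"
    by (intro nn_integral_mono_AE) (simp add: AE_measure_pmf_iff ennreal_leI flip: ennreal_mult)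
  then show ?thesis by (simp add: nn_integral_cmult)
qed

section \<open>Geometric decay of the killed chain\<close>

lemma killed_iter_drift:
  fixes \<psi> b :: real
  assumes psi: "0 \<le> \<psi>" "\<psi> < 1" and b: "0 \<le> b"
    and drift: "\<And>s. killed_op kern k V s \<le> ennreal \<psi> * V s + ennreal b"
  shows "(killed_op kern k ^^ m) V s \<le> ennreal (\<psi> ^ m) * V s + ennreal (b / (1 - \<psi>))"
proof (induction m arbitrary: s)
  case 0
  then show ?case by simp
next
  case (Suc m)
  let ?Q = "killed_op kern k"
  have "(?Q ^^ Suc m) V s = (?Q ^^ m) (?Q V) s" by (simp add: funpow_Suc_right del: funpow.simps)
  also have "\<dots> \<le> (?Q ^^ m) (\<lambda>s. ennreal \<psi> * V s + ennreal b * 1) s"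
    by (intro killed_iter_mono) (simp add: drift)
  also have "\<dots> = ennreal \<psi> * (?Q ^^ m) V s + ennreal b * avoid_prob kern k m s"
    by (simp only: killed_iter_add killed_iter_cmult avoid_prob_eq_killed_iter)
  also have "\<dots> \<le> ennreal \<psi> * (ennreal (\<psi> ^ m) * V s + ennreal (b / (1 - \<psi>))) + ennreal b * 1"
    by (intro add_mono mult_left_mono Suc avoid_prob_le_1) auto
  also have "\<dots> = ennreal (\<psi> ^ Suc m) * V s + ennreal (\<psi> * (b / (1 - \<psi>)) + b)"
  proof -
    have "ennreal (\<psi> ^ Suc m) = ennreal \<psi> * ennreal (\<psi> ^ m)"
      using psi by (simp add: ennreal_mult)
    moreover have "ennreal (\<psi> * (b / (1 - \<psi>)) + b) = ennreal \<psi> * ennreal (b / (1 - \<psi>)) + ennreal b"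
    proof -
      have nonneg: "0 \<le> b / (1 - \<psi>)" using psi b by simp
      show ?thesis
        by (simp only: ennreal_plus[OF mult_nonneg_nonneg[OF psi(1) nonneg] b] ennreal_mult[OF psi(1) nonneg])
    qed
    ultimately show ?thesis by (simp add: distrib_left mult.assoc add.assoc)
  qed
  also have "\<psi> * (b / (1 - \<psi>)) + b = b / (1 - \<psi>)"
    using psi by (simp add: field_simps)
  finally show ?case .
qed

lemma contraction_constants:
  fixes \<psi> b p v :: real
  assumes psi: "0 \<le> \<psi>" "\<psi> < 1" and b: "0 < b" and p: "0 < p" "p \<le> 1" and M: "1 \<le> M" and v: "0 < v"
  defines "b' \<equiv> b / (1 - \<psi>)" and "\<eta> \<equiv> p * (1 - \<psi>) / 2" and "c \<equiv> 2 * b / ((1 - \<psi>) * p)"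
  shows "\<psi> ^ M * v + b' + c * (1 - p) \<le> (1 - \<eta>) * (v + c)"
    and "4 * b / (1 - \<psi>)\<^sup>2 \<le> v \<Longrightarrow> \<psi> ^ M * v + b' + c \<le> (1 - \<eta>) * (v + c)"
proof -
  have b': "0 < b'" using b psi by (simp add: b'_def)
  have c: "c * p = 2 * b'" using p psi by (simp add: c_def b'_def)
  have \<eta>: "\<eta> \<le> (1 - \<psi>) / 2" "\<eta> * c = (1 - \<psi>) * b'"
    using p psi by (simp_all add: \<eta>_def c_def b'_def mult_left_le_one_le)
  have \<eta>c: "\<eta> * c \<le> b'" using \<eta>(2) psi b' by (simp add: mult_le_cancel_right1)
  have "\<psi> ^ M \<le> \<psi>" using psi M by (metis power_one_right power_decreasing less_imp_le)
  then have decay: "(1 - \<psi>) / 2 * v \<le> (1 - \<eta> - \<psi> ^ M) * v"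
    using \<eta> v by (intro mult_right_mono) auto
  moreover have "\<psi> * v \<le> v" using psi v by (simp add: mult_left_le_one_le)
  ultimately show "\<psi> ^ M * v + b' + c * (1 - p) \<le> (1 - \<eta>) * (v + c)"
    using c \<eta>c by (simp add: algebra_simps) argo
  assume big: "4 * b / (1 - \<psi>)\<^sup>2 \<le> v"
  have "4 * b' = 4 * b / (1 - \<psi>)\<^sup>2 * (1 - \<psi>)"
    using psi by (simp add: b'_def power2_eq_square)
  also have "\<dots> \<le> (1 - \<psi>) * v"
    using mult_right_mono[OF big, of "1 - \<psi>"] psi by (simp add: mult.commute)
  finally show "\<psi> ^ M * v + b' + c \<le> (1 - \<eta>) * (v + c)"
    using decay \<eta>c by (simp add: algebra_simps) argo
qed

text \<open>Where level k is hit within M steps with probability at least p, the lost mass c p pays for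
  the drift term; where v is large, the geometric decay of v absorbs it.\<close>
lemma killed_iter_contraction:
  fixes v :: "state \<Rightarrow> real"
  assumes psi: "0 \<le> \<psi>" "\<psi> < 1" and b: "0 < b" and p: "0 < p" "p \<le> 1" and M: "1 \<le> M"
    and v: "\<And>s. 0 < v s"
    and drift: "\<And>s. killed_op kern k (\<lambda>s. ennreal (v s)) s \<le> ennreal \<psi> * ennreal (v s) + ennreal b"
  obtains lam c where "0 < lam" "lam < 1" "0 < c"
    "\<And>s. avoid_prob kern k M s \<le> ennreal (1 - p) \<or> 4 * b / (1 - \<psi>)\<^sup>2 \<le> v s \<Longrightarrow>
       (killed_op kern k ^^ M) (\<lambda>s. ennreal (v s + c)) s \<le> ennreal (lam * (v s + c))"
proof -
  define b' where "b' = b / (1 - \<psi>)"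
  define \<eta> where "\<eta> = p * (1 - \<psi>) / 2"
  define c where "c = 2 * b / ((1 - \<psi>) * p)"
  have b': "0 < b'" using b psi by (simp add: b'_def)
  have c: "0 < c" using b psi p by (simp add: c_def)
  have \<eta>: "0 < \<eta>" "\<eta> < 1" using p psi by (simp_all add: \<eta>_def) (smt (verit) mult_left_le_one_le)
  have iter: "(killed_op kern k ^^ M) (\<lambda>s. ennreal (v s + c)) s \<le> ennreal (\<psi> ^ M * v s + b' + c * w)"
    if w: "avoid_prob kern k M s \<le> ennreal w" "0 \<le> w" for s w
  proof -
    have "(killed_op kern k ^^ M) (\<lambda>s. ennreal (v s + c)) s
        = (killed_op kern k ^^ M) (\<lambda>s. ennreal (v s) + ennreal c * 1) s"
      using v c by (simp add: less_imp_le)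
    also have "\<dots> = (killed_op kern k ^^ M) (\<lambda>s. ennreal (v s)) s + ennreal c * avoid_prob kern k M s"
      by (simp only: killed_iter_add killed_iter_cmult avoid_prob_eq_killed_iter)
    also have "\<dots> \<le> (ennreal (\<psi> ^ M) * ennreal (v s) + ennreal b') + ennreal c * ennreal w"
      unfolding b'_def using psi b drift
      by (intro add_mono mult_left_mono killed_iter_drift w) auto
    also have "\<dots> = ennreal (\<psi> ^ M * v s + b' + c * w)"
      using psi v[of s] b' c w by (simp add: ennreal_mult less_imp_le)
    finally show ?thesis .
  qed
  show ?thesis
  proof (rule that[of "1 - \<eta>" c])
    fix s
    assume "avoid_prob kern k M s \<le> ennreal (1 - p) \<or> 4 * b / (1 - \<psi>)\<^sup>2 \<le> v s"
    then show "(killed_op kern k ^^ M) (\<lambda>s. ennreal (v s + c)) s \<le> ennreal ((1 - \<eta>) * (v s + c))"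
    proof
      assume "avoid_prob kern k M s \<le> ennreal (1 - p)"
      then have "(killed_op kern k ^^ M) (\<lambda>s. ennreal (v s + c)) s \<le> ennreal (\<psi> ^ M * v s + b' + c * (1 - p))"
        using p by (intro iter) auto
      also have "\<dots> \<le> ennreal ((1 - \<eta>) * (v s + c))"
        using contraction_constants(1)[OF psi b p M v] unfolding b'_def \<eta>_def c_def by (rule ennreal_leI)
      finally show ?thesis .
    next
      assume big: "4 * b / (1 - \<psi>)\<^sup>2 \<le> v s"
      have "(killed_op kern k ^^ M) (\<lambda>s. ennreal (v s + c)) s \<le> ennreal (\<psi> ^ M * v s + b' + c * 1)"
        by (intro iter avoid_prob_le_1[THEN order_trans]) auto
      also have "\<dots> \<le> ennreal ((1 - \<eta>) * (v s + c))"
        using contraction_constants(2)[OF psi b p M v big] unfolding b'_def \<eta>_def c_def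
        by (simp add: ennreal_leI)
      finally show ?thesis .
    qed
  qed (use \<eta> c in auto)
qed

lemma killed_iter_geometric:
  assumes closed: "\<And>s s'. s \<in> D \<Longrightarrow> s' \<in> set_pmf (step kern s) \<Longrightarrow> s' \<in> D"
    and grow: "\<And>s. killed_op kern k G s \<le> ennreal \<kappa> * G s" and \<kappa>: "1 \<le> \<kappa>"
    and contract: "\<And>s. s \<in> D \<Longrightarrow> (killed_op kern k ^^ M) G s \<le> ennreal lam * G s"
    and lam: "0 \<le> lam" and M: "0 < M" and s: "s \<in> D"
  shows "(killed_op kern k ^^ n) G s \<le> ennreal (\<kappa> ^ M * lam ^ (n div M)) * G s"
proof -
  let ?Q = "killed_op kern k"
  have growth: "(?Q ^^ r) G s \<le> ennreal (\<kappa> ^ r) * G s" for r s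
  proof (induction r arbitrary: s)
    case (Suc r)
    have "(?Q ^^ Suc r) G s = (?Q ^^ r) (?Q G) s" by (simp add: funpow_Suc_right del: funpow.simps)
    also have "\<dots> \<le> ennreal \<kappa> * (?Q ^^ r) G s"
      using killed_iter_mono[OF grow] by (simp add: killed_iter_cmult)
    also have "\<dots> \<le> ennreal \<kappa> * (ennreal (\<kappa> ^ r) * G s)" by (intro mult_left_mono Suc.IH) simp
    also have "\<dots> = ennreal (\<kappa> ^ Suc r) * G s" using \<kappa> by (simp add: ennreal_mult mult.assoc)
    finally show ?case .
  qed simp
  have contraction: "(?Q ^^ (q * M)) G s \<le> ennreal (lam ^ q) * G s" if "s \<in> D" for q s
    using that
  proof (induction q arbitrary: s)
    case (Suc q)
    have "Suc q * M = q * M + M" by simp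
    then have "(?Q ^^ (Suc q * M)) G s = (?Q ^^ (q * M)) ((?Q ^^ M) G) s"
      by (simp only: funpow_add comp_apply)
    also have "\<dots> \<le> (?Q ^^ (q * M)) (\<lambda>s. ennreal lam * G s) s"
      using closed contract Suc.prems by (rule killed_iter_mono_on)
    also have "\<dots> \<le> ennreal lam * (ennreal (lam ^ q) * G s)"
      using Suc by (simp add: killed_iter_cmult mult_left_mono)
    also have "\<dots> = ennreal (lam ^ Suc q) * G s" using lam by (simp add: ennreal_mult mult.assoc)
    finally show ?case .
  qed simp
  have "?Q ^^ n = ?Q ^^ (n div M * M + n mod M)" by simp
  then have "(?Q ^^ n) G s = (?Q ^^ (n div M * M)) ((?Q ^^ (n mod M)) G) s"
    by (simp only: funpow_add comp_apply)
  also have "\<dots> \<le> (?Q ^^ (n div M * M)) (\<lambda>s. ennreal (\<kappa> ^ (n mod M)) * G s) s"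
    by (intro killed_iter_mono growth)
  also have "\<dots> = ennreal (\<kappa> ^ (n mod M)) * (?Q ^^ (n div M * M)) G s"
    by (simp add: killed_iter_cmult)
  also have "\<dots> \<le> ennreal (\<kappa> ^ M) * (ennreal (lam ^ (n div M)) * G s)"
    using \<kappa> M by (intro mult_mono ennreal_leI power_increasing contraction s) auto
  also have "\<dots> = ennreal (\<kappa> ^ M * lam ^ (n div M)) * G s"
    using \<kappa> lam by (simp add: ennreal_mult mult.assoc)
  finally show ?thesis .
qed

lemma power_div_le_exp:
  fixes lam :: real
  assumes lam: "0 < lam" "lam < 1" and M: "0 < M"
  shows "lam ^ (n div M) \<le> exp (ln lam / M * n) / lam"
proof -
  have "n < (n div M + 1) * M" using M by (metis add.commute div_mult_mod_eq mod_less_divisor nat_add_left_cancel_less add_mult_distrib mult_1)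
  then have "real n / M - 1 \<le> real (n div M)"
    using M by (simp add: field_simps flip: of_nat_mult of_nat_add)
  then have "real (n div M) * ln lam \<le> (real n / M - 1) * ln lam"
    using lam by (intro mult_right_mono_neg) auto
  moreover have "lam ^ (n div M) = exp (real (n div M) * ln lam)"
    using lam by (simp add: exp_of_nat_mult)
  ultimately have "lam ^ (n div M) \<le> exp ((real n / M - 1) * ln lam)"
    by simp
  also have "\<dots> = exp (ln lam / M * n) / lam"
    using lam by (simp add: algebra_simps exp_diff)
  finally show ?thesis .
qed

lemma exp_ge_beyond_level:
  fixes t B :: real
  assumes t: "0 < t"
  shows "\<exists>R::int. \<forall>x. R \<le> x \<longrightarrow> B \<le> exp (t * real_of_int x)"
proof (intro exI allI impI)
  fix x :: int
  assume "\<lceil>ln (max 1 B) / t\<rceil> \<le> x"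
  then have "ln (max 1 B) \<le> t * x" using t by (simp add: ceiling_le_iff pos_divide_le_eq mult.commute)
  then have "exp (ln (max 1 B)) \<le> exp (t * x)" by (simp only: exp_le_cancel_iff)
  moreover have "exp (ln (max 1 B)) = max 1 B" by simp
  ultimately show "B \<le> exp (t * x)" by (metis max.bounded_iff)
qed

lemma avoid_prob_le_killed_iter:
  assumes "\<And>s. 1 \<le> a * G s"
  shows "avoid_prob kern k n s \<le> a * (killed_op kern k ^^ n) G s"
proof -
  have "avoid_prob kern k n s \<le> (killed_op kern k ^^ n) (\<lambda>s. a * G s) s"
    unfolding avoid_prob_eq_killed_iter using assms by (rule killed_iter_mono)
  then show ?thesis by (simp add: killed_iter_cmult)
qed

lemma nn_integral_add_const_drift:
  fixes \<mu> :: "'a pmf" and v :: "'a \<Rightarrow> real" and x \<psi> b c :: real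
  assumes v: "\<And>y. 0 \<le> v y" and x: "0 \<le> x" and psi: "0 \<le> \<psi>" "\<psi> \<le> 1" and b: "0 \<le> b"
    and c: "0 < c"
    and drift: "(\<integral>\<^sup>+ y. ennreal (v y) \<partial>measure_pmf \<mu>) \<le> ennreal \<psi> * ennreal x + ennreal b"
  shows "(\<integral>\<^sup>+ y. ennreal (v y + c) \<partial>measure_pmf \<mu>) \<le> ennreal (1 + b / c) * ennreal (x + c)"
proof -
  have "(\<integral>\<^sup>+ y. ennreal (v y + c) \<partial>measure_pmf \<mu>) = (\<integral>\<^sup>+ y. ennreal (v y) \<partial>measure_pmf \<mu>) + ennreal c"
    using v c by (simp add: nn_integral_add measure_pmf.emeasure_space_1[simplified])
  also have "\<dots> \<le> ennreal (\<psi> * x + b + c)"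
    using drift x psi b c by (simp add: ennreal_mult add_right_mono)
  also have "\<dots> \<le> ennreal ((1 + b / c) * (x + c))"
  proof (rule ennreal_leI)
    have "\<psi> * x \<le> x" using psi x by (simp add: mult_left_le_one_le)
    moreover have "0 \<le> b / c * x" using b c x by simp
    moreover have "(1 + b / c) * (x + c) = x + c + b / c * x + b" using c by (simp add: field_simps)
    ultimately show "\<psi> * x + b + c \<le> (1 + b / c) * (x + c)" by argo
  qed
  also have "\<dots> = ennreal (1 + b / c) * ennreal (x + c)" using b c x by (simp add: ennreal_mult)
  finally show ?thesis .
qed

lemma killed_iter_exp_lyapunov:
  fixes kern :: "state \<Rightarrow> state pmf" and t \<psi> b :: real
  assumes closed: "\<And>s s'. 0 \<le> fst s \<Longrightarrow> s' \<in> set_pmf (step kern s) \<Longrightarrow> 0 \<le> fst s'"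
    and t: "0 < t" and psi: "0 \<le> \<psi>" "\<psi> < 1" and b: "0 < b"
    and drift: "\<And>s. (\<integral>\<^sup>+ s'. ennreal (exp (t * real_of_int (fst s'))) \<partial>measure_pmf (step kern s))
                  \<le> ennreal \<psi> * ennreal (exp (t * real_of_int (fst s))) + ennreal b"
    and hitting: "\<And>R. \<exists>p M. 0 < p \<and> p \<le> 1 \<and> 1 \<le> M \<and>
                  (\<forall>s. 0 \<le> fst s \<and> fst s < R \<longrightarrow> avoid_prob kern k M s \<le> ennreal (1 - p))"
  obtains c \<kappa> lam M where "0 < c" "1 \<le> \<kappa>" "0 < lam" "lam < 1" "0 < M"
    "\<And>n s. 0 \<le> fst s \<Longrightarrow>
       (killed_op kern k ^^ n) (\<lambda>s. ennreal (exp (t * real_of_int (fst s)) + c)) s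
         \<le> ennreal (\<kappa> ^ M * lam ^ (n div M)) * ennreal (exp (t * real_of_int (fst s)) + c)"
proof -
  define v where "v s = exp (t * real_of_int (fst s))" for s :: state
  obtain R where R: "\<And>s. R \<le> fst s \<Longrightarrow> 4 * b / (1 - \<psi>)\<^sup>2 \<le> v s"
    using exp_ge_beyond_level[OF t] unfolding v_def by blast
  obtain p M where p: "0 < p" "p \<le> 1" and M: "1 \<le> M"
    and hit: "\<And>s. 0 \<le> fst s \<Longrightarrow> fst s < R \<Longrightarrow> avoid_prob kern k M s \<le> ennreal (1 - p)"
    using hitting[of R] by blast
  have killed_drift: "killed_op kern k (\<lambda>s. ennreal (v s)) s \<le> ennreal \<psi> * ennreal (v s) + ennreal b" for s
    using killed_op_le_nn_integral drift unfolding v_def by (rule order_trans)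
  obtain lam c where lam: "0 < lam" "lam < 1" and c: "0 < c"
    and contract: "\<And>s. avoid_prob kern k M s \<le> ennreal (1 - p) \<or> 4 * b / (1 - \<psi>)\<^sup>2 \<le> v s \<Longrightarrow>
       (killed_op kern k ^^ M) (\<lambda>s. ennreal (v s + c)) s \<le> ennreal (lam * (v s + c))"
    using killed_iter_contraction[OF psi b p M _ killed_drift] by (auto simp: v_def)
  define G where "G s = ennreal (v s + c)" for s
  define \<kappa> where "\<kappa> = 1 + b / c"
  have \<kappa>: "1 \<le> \<kappa>" using b c by (simp add: \<kappa>_def)
  have "(killed_op kern k ^^ n) G s \<le> ennreal (\<kappa> ^ M * lam ^ (n div M)) * G s"
    if "0 \<le> fst s" for n s
  proof (rule killed_iter_geometric[where D = "{s. 0 \<le> fst s}"])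
    show "killed_op kern k G s \<le> ennreal \<kappa> * G s" for s
      unfolding G_def \<kappa>_def using psi b c drift[of s]
      by (intro killed_op_le_nn_integral[THEN order_trans] nn_integral_add_const_drift) (simp_all add: v_def)
    show "(killed_op kern k ^^ M) G s \<le> ennreal lam * G s" if "s \<in> {s. 0 \<le> fst s}" for s
    proof -
      have "avoid_prob kern k M s \<le> ennreal (1 - p) \<or> 4 * b / (1 - \<psi>)\<^sup>2 \<le> v s"
        using that hit R by (cases "fst s < R") auto
      then have "(killed_op kern k ^^ M) G s \<le> ennreal (lam * (v s + c))"
        unfolding G_def[abs_def] by (rule contract)
      then show ?thesis
        using lam c by (simp add: G_def v_def ennreal_mult add_pos_pos)
    qed
  qed (use closed that \<kappa> M lam in auto)
  moreover have "0 < M" using M by simp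
  ultimately show ?thesis
    using that[of c \<kappa> lam M] c \<kappa> lam unfolding G_def[abs_def] v_def by blast
qed

lemma avoid_prob_geometric_decay:
  fixes kern :: "state \<Rightarrow> state pmf" and t \<psi> b :: real
  assumes closed: "\<And>s s'. 0 \<le> fst s \<Longrightarrow> s' \<in> set_pmf (step kern s) \<Longrightarrow> 0 \<le> fst s'"
    and t: "0 < t" and psi: "0 \<le> \<psi>" "\<psi> < 1" and b: "0 < b"
    and drift: "\<And>s. (\<integral>\<^sup>+ s'. ennreal (exp (t * real_of_int (fst s'))) \<partial>measure_pmf (step kern s))
                  \<le> ennreal \<psi> * ennreal (exp (t * real_of_int (fst s))) + ennreal b"
    and hitting: "\<And>R. \<exists>p M. 0 < p \<and> p \<le> 1 \<and> 1 \<le> M \<and>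
                  (\<forall>s. 0 \<le> fst s \<and> fst s < R \<longrightarrow> avoid_prob kern k M s \<le> ennreal (1 - p))"
  obtains A lam M where "0 < A" "0 < lam" "lam < 1" "0 < M"
    "\<And>n s. 0 \<le> fst s \<Longrightarrow>
       avoid_prob kern k n s \<le> ennreal (A * lam ^ (n div M) * exp (t * real_of_int (fst s)))"
proof -
  define v where "v s = exp (t * real_of_int (fst s))" for s :: state
  obtain c \<kappa> lam M where c: "0 < c" and \<kappa>: "1 \<le> \<kappa>" and lam: "0 < lam" "lam < 1" and M: "0 < M"
    and geometric: "\<And>n s. 0 \<le> fst s \<Longrightarrow> (killed_op kern k ^^ n) (\<lambda>s. ennreal (v s + c)) s
         \<le> ennreal (\<kappa> ^ M * lam ^ (n div M)) * ennreal (v s + c)"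
    using killed_iter_exp_lyapunov[of kern t \<psi> b k] closed t psi b drift hitting unfolding v_def by blast
  define A where "A = \<kappa> ^ M * (1 + c) / c"
  show ?thesis
  proof (rule that[of A lam M])
    fix n s assume s: "0 \<le> fst (s::state)"
    have "avoid_prob kern k n s \<le> ennreal (1 / c) * (killed_op kern k ^^ n) (\<lambda>s. ennreal (v s + c)) s"
      using c by (intro avoid_prob_le_killed_iter)
        (simp add: v_def ennreal_mult[symmetric] field_simps del: ennreal_plus)
    also have "\<dots> \<le> ennreal (1 / c) * (ennreal (\<kappa> ^ M * lam ^ (n div M)) * ennreal (v s + c))"
      by (intro mult_left_mono geometric s) simp
    also have "\<dots> = ennreal (1 / c * (\<kappa> ^ M * lam ^ (n div M)) * (v s + c))"
    proof -
      have "0 \<le> 1 / c" "0 \<le> \<kappa> ^ M" "0 \<le> lam ^ (n div M)" "0 \<le> v s + c"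
        using c lam \<kappa> by (auto simp: v_def add_nonneg_nonneg)
      then show ?thesis by (simp only: ennreal_mult mult_nonneg_nonneg mult.assoc)
    qed
    also have "\<dots> \<le> ennreal (A * lam ^ (n div M) * v s)"
    proof (rule ennreal_leI)
      have "v s + c \<le> (1 + c) * v s" using s t c by (simp add: v_def algebra_simps)
      then show "1 / c * (\<kappa> ^ M * lam ^ (n div M)) * (v s + c) \<le> A * lam ^ (n div M) * v s"
        using c lam \<kappa> mult_left_mono[of "v s + c" "(1 + c) * v s" "\<kappa> ^ M * lam ^ (n div M) / c"]
        by (simp add: A_def field_simps)
    qed
    finally show "avoid_prob kern k n s \<le> ennreal (A * lam ^ (n div M) * exp (t * real_of_int (fst s)))"
      by (simp add: v_def)
  qed (use lam c \<kappa> M in \<open>auto simp: A_def\<close>)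
qed

lemma emeasure_no_return_Suc_le:
  fixes kern :: "state \<Rightarrow> state pmf" and t \<psi> b a :: real
  assumes closed: "\<And>s'. s' \<in> set_pmf (step kern s) \<Longrightarrow> 0 \<le> fst s'"
    and t: "0 \<le> t" and s: "0 \<le> fst s" and psi: "0 \<le> \<psi>" "\<psi> \<le> 1" and b: "0 \<le> b" and a: "0 \<le> a"
    and drift: "(\<integral>\<^sup>+ s'. ennreal (exp (t * real_of_int (fst s'))) \<partial>measure_pmf (step kern s))
                  \<le> ennreal \<psi> * ennreal (exp (t * real_of_int (fst s))) + ennreal b"
    and decay: "\<And>s'. 0 \<le> fst s' \<Longrightarrow> avoid_prob kern k n s' \<le> ennreal (a * exp (t * real_of_int (fst s')))"
  shows "emeasure (measure_pmf (traj kern s (Suc n))) {xs. \<forall>m. 0 < m \<and> m < Suc n \<longrightarrow> fst (xs ! m) \<noteq> k}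
           \<le> ennreal (a * (1 + b) * exp (t * real_of_int (fst s)))"
proof -
  define e where "e s = exp (t * real_of_int (fst s))" for s :: state
  have "emeasure (measure_pmf (traj kern s (Suc n))) {xs. \<forall>m. 0 < m \<and> m < Suc n \<longrightarrow> fst (xs ! m) \<noteq> k}
      = (\<integral>\<^sup>+ s'. avoid_prob kern k n s' \<partial>measure_pmf (step kern s))"
    by (rule emeasure_no_return_Suc)
  also have "\<dots> \<le> (\<integral>\<^sup>+ s'. ennreal a * ennreal (e s') \<partial>measure_pmf (step kern s))"
    using decay closed a by (intro nn_integral_mono_AE) (simp add: AE_measure_pmf_iff e_def ennreal_mult)
  also have "\<dots> \<le> ennreal a * (ennreal \<psi> * ennreal (e s) + ennreal b)"
    using drift by (simp add: nn_integral_cmult e_def mult_left_mono)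
  also have "\<dots> = ennreal (a * (\<psi> * e s + b))"
    using a psi b by (simp add: e_def ennreal_mult)
  also have "\<dots> \<le> ennreal (a * ((1 + b) * e s))"
  proof (intro ennreal_leI mult_left_mono a)
    have "1 \<le> e s" using t s by (simp add: e_def)
    have "\<psi> * e s \<le> e s" using psi \<open>1 \<le> e s\<close> by (simp add: mult_left_le_one_le)
    moreover have "b * 1 \<le> b * e s" using \<open>1 \<le> e s\<close> b by (rule mult_left_mono)
    ultimately show "\<psi> * e s + b \<le> (1 + b) * e s"
      unfolding distrib_right by argo
  qed
  finally show ?thesis by (simp add: e_def mult.assoc)
qed

lemma avoid_prob_exp_decay:
  fixes kern :: "state \<Rightarrow> state pmf" and t \<psi> b :: real
  assumes closed: "\<And>s s'. 0 \<le> fst s \<Longrightarrow> s' \<in> set_pmf (step kern s) \<Longrightarrow> 0 \<le> fst s'"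
    and t: "0 < t" and psi: "0 \<le> \<psi>" "\<psi> < 1" and b: "0 < b"
    and drift: "\<And>s. (\<integral>\<^sup>+ s'. ennreal (exp (t * real_of_int (fst s'))) \<partial>measure_pmf (step kern s))
                  \<le> ennreal \<psi> * ennreal (exp (t * real_of_int (fst s))) + ennreal b"
    and hitting: "\<And>R. \<exists>p M. 0 < p \<and> p \<le> 1 \<and> 1 \<le> M \<and>
                  (\<forall>s. 0 \<le> fst s \<and> fst s < R \<longrightarrow> avoid_prob kern k M s \<le> ennreal (1 - p))"
  obtains A \<delta> where "0 < A" "0 < \<delta>"
    "\<And>n s. 0 \<le> fst s \<Longrightarrow>
       avoid_prob kern k n s \<le> ennreal (A * exp (- \<delta> * n) * exp (t * real_of_int (fst s)))"
proof -
  obtain A lam M where A: "0 < A" and lam: "0 < lam" "lam < 1" and M: "0 < M"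
    and decay: "\<And>n s. 0 \<le> fst s \<Longrightarrow>
       avoid_prob kern k n s \<le> ennreal (A * lam ^ (n div M) * exp (t * real_of_int (fst s)))"
    using avoid_prob_geometric_decay[of kern t \<psi> b k] closed t psi b drift hitting by blast
  show ?thesis
  proof (rule that[of "A / lam" "- ln lam / M"])
    fix n s assume s: "0 \<le> fst (s::state)"
    have "lam ^ (n div M) \<le> exp (- (- ln lam / M) * n) / lam"
      using power_div_le_exp[OF lam M, of n] by simp
    then have "A * lam ^ (n div M) * exp (t * real_of_int (fst s))
        \<le> A * (exp (- (- ln lam / M) * n) / lam) * exp (t * real_of_int (fst s))"
      using A by (intro mult_right_mono mult_left_mono) auto
    also have "\<dots> = A / lam * exp (- (- ln lam / M) * n) * exp (t * real_of_int (fst s))"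
      by simp
    finally have "A * lam ^ (n div M) * exp (t * real_of_int (fst s))
        \<le> A / lam * exp (- (- ln lam / M) * n) * exp (t * real_of_int (fst s))" .
    with decay[OF s] show "avoid_prob kern k n s
        \<le> ennreal (A / lam * exp (- (- ln lam / M) * n) * exp (t * real_of_int (fst s)))"
      by (rule order_trans[OF _ ennreal_leI])
  qed (use A lam M in \<open>simp_all add: divide_neg_pos\<close>)
qed

theorem no_return_tail_bound:
  fixes kern :: "state \<Rightarrow> state pmf" and t \<psi> b :: real
  assumes closed: "\<And>s s'. 0 \<le> fst s \<Longrightarrow> s' \<in> set_pmf (step kern s) \<Longrightarrow> 0 \<le> fst s'"
    and t: "0 < t" and psi: "0 \<le> \<psi>" "\<psi> < 1" and b: "0 < b"
    and drift: "\<And>s. (\<integral>\<^sup>+ s'. ennreal (exp (t * real_of_int (fst s'))) \<partial>measure_pmf (step kern s))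
                  \<le> ennreal \<psi> * ennreal (exp (t * real_of_int (fst s))) + ennreal b"
    and hitting: "\<And>R. \<exists>p M. 0 < p \<and> p \<le> 1 \<and> 1 \<le> M \<and>
                  (\<forall>s. 0 \<le> fst s \<and> fst s < R \<longrightarrow> avoid_prob kern k M s \<le> ennreal (1 - p))"
  shows "\<exists>C>0. \<exists>\<delta>>0. \<forall>n s. 0 \<le> fst s \<longrightarrow>
           measure_pmf.prob (traj kern s n) {xs. \<forall>m. 0 < m \<and> m < n \<longrightarrow> fst (xs ! m) \<noteq> k}
             \<le> C * exp (t * real_of_int (fst s) - \<delta> * real n)"
proof -
  obtain A \<delta> where A: "0 < A" and \<delta>: "0 < \<delta>" and decay: "\<And>n s. 0 \<le> fst s \<Longrightarrow>
       avoid_prob kern k n s \<le> ennreal (A * exp (- \<delta> * n) * exp (t * real_of_int (fst s)))"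
    using avoid_prob_exp_decay[of kern t \<psi> b k] closed t psi b drift hitting by blast
  define C where "C = max 1 (A * exp \<delta> * (1 + b))"
  have "measure_pmf.prob (traj kern s n) {xs. \<forall>m. 0 < m \<and> m < n \<longrightarrow> fst (xs ! m) \<noteq> k}
          \<le> C * exp (t * real_of_int (fst s) - \<delta> * real n)" if s: "0 \<le> fst s" for n s
  proof (cases n)
    case 0
    have "1 * 1 \<le> C * exp (t * real_of_int (fst s))"
      using s t by (intro mult_mono) (auto simp: C_def)
    then show ?thesis using 0 by (simp add: measure_pmf.prob_le_1 order_trans)
  next
    case (Suc n')
    have "A * exp (- \<delta> * n') * (1 + b) * exp (t * real_of_int (fst s))
        = A * exp \<delta> * (1 + b) * exp (t * real_of_int (fst s) - \<delta> * real n)"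
      using Suc by (simp add: algebra_simps flip: exp_add)
    also have "\<dots> \<le> C * exp (t * real_of_int (fst s) - \<delta> * real n)"
      unfolding C_def by (intro mult_right_mono) auto
    finally have "emeasure (measure_pmf (traj kern s n)) {xs. \<forall>m. 0 < m \<and> m < n \<longrightarrow> fst (xs ! m) \<noteq> k}
        \<le> ennreal (C * exp (t * real_of_int (fst s) - \<delta> * real n))"
      unfolding Suc using psi b A s t drift closed[OF s] decay
      by (intro emeasure_no_return_Suc_le[where a = "A * exp (- \<delta> * n')" and t = t and \<psi> = \<psi>
            and b = b, THEN order_trans])
        (auto intro: ennreal_leI)
    then show ?thesis
      by (simp add: measure_pmf.emeasure_eq_measure C_def)
  qed
  then show ?thesis using \<delta> by (intro exI[of _ C] exI[of _ \<delta>]) (auto simp: C_def)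
qed

section \<open>The chain Z_1\<close>

lemma kernZ1_eq_kernZ:
  "1 \<le> k0 \<Longrightarrow> kernZ1 k0 mu mu'' s = kernZ k0 mu mu' mu'' mu2 (max 0 (fst s), int k0)"
  by (cases "fst s < 0") (auto simp: kernZ1_def kernZ_def)

lemma kernZ1_shift_snd: "kernZ1 k0 mu mu'' (x, j) = kernZ1 k0 mu mu'' (x, j')"
  by (simp add: kernZ1_def)

lemma kernZ1_step_fst_nonneg:
  assumes k0: "1 \<le> k0"
    and mu: "\<forall>d\<in>set_pmf mu. - int k0 \<le> fst d"
    and mu'': "\<forall>i<k0. \<forall>d\<in>set_pmf (mu'' i). - int i \<le> fst d"
    and s: "0 \<le> fst s" and s': "s' \<in> set_pmf (step (kernZ1 k0 mu mu'') s)"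
  shows "0 \<le> fst s'"
proof -
  obtain d where d: "d \<in> set_pmf (kernZ1 k0 mu mu'' s)" and s'_eq: "s' = (fst s + fst d, snd s + snd d)"
    using s' by (auto simp: step_def)
  show ?thesis
  proof (cases "int k0 \<le> fst s")
    case True
    then show ?thesis using d mu s'_eq by (fastforce simp: kernZ1_def)
  next
    case False
    then have "nat (fst s) < k0" using s by linarith
    then show ?thesis using d mu'' s'_eq s False by (fastforce simp: kernZ1_def)
  qed
qed

lemma kernZ1_exp_moment:
  fixes k0 :: nat
  assumes k0: "1 \<le> k0"
    and mu: "\<forall>d\<in>set_pmf mu. - int k0 \<le> snd d"
    and mu'': "\<forall>i<k0. \<forall>d\<in>set_pmf (mu'' i). - int k0 \<le> snd d"
    and A2: "\<exists>\<delta>>0. \<exists>\<gamma>>0. \<exists>C>0. \<forall>s\<in>NN.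
              (\<integral>\<^sup>+ d. ennreal (exp (\<delta> * real_of_int (fst d) + \<gamma> * real_of_int (snd d)))
                   \<partial>measure_pmf (kernZ k0 mu mu' mu'' mu2 s)) \<le> ennreal C"
  obtains \<delta> C where "0 < \<delta>" "0 \<le> C"
    "\<And>s. (\<integral>\<^sup>+ d. ennreal (exp (\<delta> * real_of_int (fst d))) \<partial>measure_pmf (kernZ1 k0 mu mu'' s)) \<le> ennreal C"
proof -
  obtain \<delta> \<gamma> C where \<delta>: "0 < \<delta>" and \<gamma>: "0 < \<gamma>" and C: "0 < C"
    and mom: "\<And>s. s \<in> NN \<Longrightarrow> (\<integral>\<^sup>+ d. ennreal (exp (\<delta> * real_of_int (fst d) + \<gamma> * real_of_int (snd d)))
                   \<partial>measure_pmf (kernZ k0 mu mu' mu'' mu2 s)) \<le> ennreal C"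
    using A2 by blast
  show ?thesis
  proof (rule that[of \<delta> "exp (\<gamma> * k0) * C"])
    fix s :: state
    let ?K = "kernZ1 k0 mu mu'' s"
    have "- int k0 \<le> snd d" if "d \<in> set_pmf ?K" for d
    proof (cases "int k0 \<le> fst s")
      case True
      then show ?thesis using that mu by (auto simp: kernZ1_def)
    next
      case False
      then have "nat (fst s) < k0" using k0 by linarith
      then show ?thesis using that mu'' False by (auto simp: kernZ1_def)
    qed
    then have "\<forall>d\<in>set_pmf ?K. - real k0 \<le> real_of_int (snd d)" by force
    then have "(\<integral>\<^sup>+ d. ennreal (exp (\<delta> * real_of_int (fst d))) \<partial>measure_pmf ?K)
        \<le> ennreal (exp (\<gamma> * k0)) * (\<integral>\<^sup>+ d. ennreal (exp (\<delta> * real_of_int (fst d) + \<gamma> * real_of_int (snd d))) \<partial>measure_pmf ?K)"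
      using \<gamma> by (intro nn_integral_exp_fst_le) auto
    also have "\<dots> \<le> ennreal (exp (\<gamma> * k0)) * ennreal C"
      using mom[of "(max 0 (fst s), int k0)"] k0
      by (intro mult_left_mono) (simp_all add: NN_def kernZ1_eq_kernZ[of k0 mu mu'' s mu' mu2])
    finally show "(\<integral>\<^sup>+ d. ennreal (exp (\<delta> * real_of_int (fst d))) \<partial>measure_pmf ?K) \<le> ennreal (exp (\<gamma> * k0) * C)"
      using C by (simp add: ennreal_mult)
  qed (use \<delta> C in auto)
qed

lemma nn_integral_step_kernZ1_exp_le:
  fixes t \<psi> B :: real
  assumes k0: "1 \<le> k0" and t: "0 \<le> t"
    and mu: "(\<integral>\<^sup>+ d. ennreal (exp (t * real_of_int (fst d))) \<partial>measure_pmf mu) \<le> ennreal \<psi>"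
    and mom: "\<And>s. (\<integral>\<^sup>+ d. ennreal (exp (t * real_of_int (fst d))) \<partial>measure_pmf (kernZ1 k0 mu mu'' s)) \<le> ennreal B"
  shows "(\<integral>\<^sup>+ s'. ennreal (exp (t * real_of_int (fst s'))) \<partial>measure_pmf (step (kernZ1 k0 mu mu'') s))
           \<le> ennreal \<psi> * ennreal (exp (t * real_of_int (fst s))) + ennreal (exp (t * k0) * B)"
proof -
  let ?K = "kernZ1 k0 mu mu'' s"
  let ?I = "\<integral>\<^sup>+ d. ennreal (exp (t * real_of_int (fst d))) \<partial>measure_pmf ?K"
  have "(\<integral>\<^sup>+ s'. ennreal (exp (t * real_of_int (fst s'))) \<partial>measure_pmf (step (kernZ1 k0 mu mu'') s))
      = ennreal (exp (t * real_of_int (fst s))) * ?I"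
    by (simp add: step_def distrib_left exp_add ennreal_mult' nn_integral_cmult)
  also have "\<dots> \<le> ennreal \<psi> * ennreal (exp (t * real_of_int (fst s))) + ennreal (exp (t * k0) * B)"
  proof (cases "int k0 \<le> fst s")
    case True
    then have "?I \<le> ennreal \<psi>" using mu by (simp add: kernZ1_def)
    then have "ennreal (exp (t * real_of_int (fst s))) * ?I \<le> ennreal \<psi> * ennreal (exp (t * real_of_int (fst s)))"
      by (metis mult.commute mult_left_mono zero_le)
    then show ?thesis by (metis add_increasing2 zero_le)
  next
    case False
    then have "exp (t * real_of_int (fst s)) \<le> exp (t * k0)" using t by (simp add: mult_left_mono)
    then have "ennreal (exp (t * real_of_int (fst s))) * ?I \<le> ennreal (exp (t * k0)) * ennreal B"
      using mom[of s] by (intro mult_mono) (auto intro: ennreal_leI)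
    also have "\<dots> \<le> ennreal (exp (t * k0) * B)" by (cases "0 \<le> B") (simp_all add: ennreal_mult ennreal_neg)
    finally show ?thesis by (simp add: add_increasing)
  qed
  finally show ?thesis .
qed

lemma kernZ1_geometric_drift:
  fixes k0 :: nat and \<theta> :: real
  assumes k0: "1 \<le> k0"
    and mu: "\<forall>d\<in>set_pmf mu. - int k0 \<le> fst d \<and> - int k0 \<le> snd d"
    and mu'': "\<forall>i<k0. \<forall>d\<in>set_pmf (mu'' i). - int k0 \<le> snd d"
    and A2: "\<exists>\<delta>>0. \<exists>\<gamma>>0. \<exists>C>0. \<forall>s\<in>NN.
              (\<integral>\<^sup>+ d. ennreal (exp (\<delta> * real_of_int (fst d) + \<gamma> * real_of_int (snd d)))
                   \<partial>measure_pmf (kernZ k0 mu mu' mu'' mu2 s)) \<le> ennreal C"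
    and m1_neg: "measure_pmf.expectation mu (\<lambda>d. real_of_int (fst d)) < 0" and \<theta>: "0 < \<theta>"
  obtains t \<psi> b where "0 < t" "t \<le> \<theta>" "0 \<le> \<psi>" "\<psi> < 1" "0 < b"
    "\<And>s. (\<integral>\<^sup>+ s'. ennreal (exp (t * real_of_int (fst s'))) \<partial>measure_pmf (step (kernZ1 k0 mu mu'') s))
            \<le> ennreal \<psi> * ennreal (exp (t * real_of_int (fst s))) + ennreal b"
proof -
  let ?K = "kernZ1 k0 mu mu''"
  obtain \<delta>0 C1 where \<delta>0: "0 < \<delta>0" and C1: "0 \<le> C1"
    and mom: "\<And>s. (\<integral>\<^sup>+ d. ennreal (exp (\<delta>0 * real_of_int (fst d))) \<partial>measure_pmf (?K s)) \<le> ennreal C1"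
    using kernZ1_exp_moment[OF k0 _ mu'' A2] mu by blast
  have "?K (int k0, 0) = mu" by (simp add: kernZ1_def)
  then obtain t \<psi> where t: "0 < t" "t \<le> \<theta>" "t \<le> \<delta>0" and \<psi>: "0 \<le> \<psi>" "\<psi> < 1"
    and mu_drift: "(\<integral>\<^sup>+ d. ennreal (exp (t * real_of_int (fst d))) \<partial>measure_pmf mu) \<le> ennreal \<psi>"
    using exp_moment_lt_1_of_neg_mean[where \<mu> = mu and X = "\<lambda>d. real_of_int (fst d)" and L = k0
        and \<delta> = \<delta>0 and \<theta> = \<theta>] mu \<delta>0 mom[of "(int k0, 0)"] m1_neg \<theta>
    by (force simp: ennreal_less_top order.strict_trans1)
  have mom_t: "(\<integral>\<^sup>+ d. ennreal (exp (t * real_of_int (fst d))) \<partial>measure_pmf (?K s)) \<le> ennreal (1 + C1)" for s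
    using nn_integral_exp_smaller_exponent[where \<mu> = "?K s" and X = "\<lambda>d. real_of_int (fst d)"
        and t = t and \<delta> = \<delta>0] mom[of s] t C1
    by (simp add: order_trans add_left_mono)
  show ?thesis
    using that[OF t(1,2) \<psi>, of "exp (t * k0) * (1 + C1)"] nn_integral_step_kernZ1_exp_le[OF k0 _ mu_drift mom_t] t C1
    by (simp add: add_pos_nonneg)
qed

theorem lemma5p4:
  fixes k0 :: nat
    and mu :: "state pmf"
    and mu' mu'' :: "nat \<Rightarrow> state pmf"
    and mu2 :: "nat \<Rightarrow> nat \<Rightarrow> state pmf"
  assumes k0: "k0 \<ge> 1"
    and A1_mu: "\<forall>d\<in>set_pmf mu. fst d \<ge> - int k0 \<and> snd d \<ge> - int k0"
    and A1_mu': "\<forall>j<k0. \<forall>d\<in>set_pmf (mu' j). fst d \<ge> - int k0 \<and> snd d \<ge> - int j"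
    and A1_mu'': "\<forall>i<k0. \<forall>d\<in>set_pmf (mu'' i). snd d \<ge> - int k0 \<and> fst d \<ge> - int i"
    and A1_mu2: "\<forall>i<k0. \<forall>j<k0. \<forall>d\<in>set_pmf (mu2 i j). fst d \<ge> - int i \<and> snd d \<ge> - int j"
    and A2: "\<exists>\<delta>>0. \<exists>\<gamma>>0. \<exists>C>0. \<forall>s\<in>NN.
              (\<integral>\<^sup>+ d. ennreal (exp (\<delta> * real_of_int (fst d) + \<gamma> * real_of_int (snd d)))
                   \<partial>measure_pmf (kernZ k0 mu mu' mu'' mu2 s)) \<le> ennreal C"
    and A3_Z0: "irreducible_on UNIV (\<lambda>s. mu)"
    and A3_Z1: "irreducible_on NZ (kernZ1 k0 mu mu'')"
    and A3_Z2: "irreducible_on ZN (kernZ2 k0 mu mu')"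
    and A3_Z: "irreducible_on NN (kernZ k0 mu mu' mu'' mu2)"
    and m1_neg: "measure_pmf.expectation mu (\<lambda>d. real_of_int (fst d)) < 0"
  shows "\<forall>\<theta>>0. \<forall>k::nat. \<exists>C>0. \<exists>\<delta>>0. \<forall>(i::nat) (j::int) (n::nat).
           T1_ge_prob k0 mu mu'' k (int i, j) n \<le> C * exp (\<theta> * real i - \<delta> * real n)"
proof (intro allI impI)
  fix \<theta> :: real and k :: nat
  assume "0 < \<theta>"
  let ?K = "kernZ1 k0 mu mu''"
  obtain t \<psi> b where t: "0 < t" "t \<le> \<theta>" and \<psi>: "0 \<le> \<psi>" "\<psi> < 1" and b: "0 < b"
    and drift: "\<And>s. (\<integral>\<^sup>+ s'. ennreal (exp (t * real_of_int (fst s'))) \<partial>measure_pmf (step ?K s))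
                  \<le> ennreal \<psi> * ennreal (exp (t * real_of_int (fst s))) + ennreal b"
    using kernZ1_geometric_drift[OF k0 A1_mu _ A2 m1_neg \<open>0 < \<theta>\<close>] A1_mu'' by blast
  have closed: "\<And>s s'. 0 \<le> fst s \<Longrightarrow> s' \<in> set_pmf (step ?K s) \<Longrightarrow> 0 \<le> fst s'"
    using kernZ1_step_fst_nonneg[OF k0] A1_mu A1_mu'' by blast
  have hitting: "\<exists>p M. 0 < p \<and> p \<le> 1 \<and> 1 \<le> M \<and>
      (\<forall>s. 0 \<le> fst s \<and> fst s < R \<longrightarrow> avoid_prob ?K (int k) M s \<le> ennreal (1 - p))" for R
    by (rule uniform_hitting_below_level[OF A3_Z1 kernZ1_shift_snd]) simp
  have "\<exists>C>0. \<exists>\<delta>>0. \<forall>n s. 0 \<le> fst s \<longrightarrow>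
      measure_pmf.prob (traj ?K s n) {xs. \<forall>m. 0 < m \<and> m < n \<longrightarrow> fst (xs ! m) \<noteq> int k}
        \<le> C * exp (t * real_of_int (fst s) - \<delta> * real n)"
    by (rule no_return_tail_bound[where t = t and \<psi> = \<psi> and b = b])
      (use closed t \<psi> b drift hitting in auto)
  then obtain C \<delta> where C: "0 < C" and \<delta>: "0 < \<delta>" and tail: "\<And>n s. 0 \<le> fst s \<Longrightarrow>
      measure_pmf.prob (traj ?K s n) {xs. \<forall>m. 0 < m \<and> m < n \<longrightarrow> fst (xs ! m) \<noteq> int k}
        \<le> C * exp (t * real_of_int (fst s) - \<delta> * real n)"
    by blast
  have "T1_ge_prob k0 mu mu'' k (int i, j) n \<le> C * exp (t * real i - \<delta> * real n)" for i j n
    using tail[of "(int i, j)" n] by (simp add: T1_ge_prob_def)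
  moreover have "C * exp (t * real i - \<delta> * real n) \<le> C * exp (\<theta> * real i - \<delta> * real n)" for i n
    using C t(2) by (simp add: mult_right_mono)
  ultimately show "\<exists>C>0. \<exists>\<delta>>0. \<forall>(i::nat) (j::int) (n::nat).
      T1_ge_prob k0 mu mu'' k (int i, j) n \<le> C * exp (\<theta> * real i - \<delta> * real n)"
    using C \<delta> order_trans by blast
qed

end
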